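(* Let $$(W)\qquad w_{,t}=(w+1)\Bigl(w_2\Bigl(\frac{1}{w_1}+1\Bigr)w-w\Bigl(\frac{1}{w_{-1}}+1\Bigr)w_{-2}+w_1-w_{-1}\Bigr).$$ In each of the following cases, if $u(n,t)$ is a solution of the given lattice equation, then $w(n,t)$ defined by the given formula is a solution of $(W)$: (a) $\tfrac12u_{,t}=\frac{1}{\frac{2}{u_2-u}+\frac{1}{u-u_1}+\frac{1}{u-u_{-1}}}-\frac{1}{\frac{2}{u_{-2}-u}+\frac{1}{u-u_1}+\frac{1}{u-u_{-1}}}$, with $w=\frac{1}{2\frac{(u_3-u_2)(u_1-u)}{(u_3-u_1)(u_2-u)}-1}$; (c) $\tfrac14u_{,t}=\frac{1}{\frac{(u_2-u+2)(u_1-u-1)(u_{-1}-u-1)}{(u_2-u-2)(u_1-u+1)(u_{-1}-u+1)}-1}+\frac{1}{\frac{(u_{-2}-u-2)(u_1-u+1)(u_{-1}-u+1)}{(u_{-2}-u+2)(u_1-u-1)(u_{-1}-u-1)}-1}$, with $w=\frac{(u_3-2u_2+u_1)(u_2-2u_1+u)}{2-2(u_2-u_1)^2-(u_3-2u_2+u_1)(u_2-2u_1+u)}$; (d) $u_{,t}=\frac{u-u_{-1}}{u_1-u_{-1}+\frac{u-u_1}{u-u_2}}-\frac{u-u_1}{u_1-u_{-1}+\frac{u-u_{-1}}{u-u_{-2}}}$, with $w=-\frac{1}{1+\frac{u_2-u_1}{(u_3-u_1)(u_2-u)}}$; (f) $u_{,t}=u\frac{(1-\frac{u}{u_2})(1-\frac{u_{-1}}{u})}{1-\frac{u}{u_1}}+u\frac{(1-\frac{u_{-2}}{u})(1-\frac{u}{u_1})}{1-\frac{u_{-1}}{u}}$,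 with $w=\frac{u}{u_1}-1$; (h) $u_{,t}=u\frac{(1-\frac{u}{u_2})(1+\frac{u_{-1}}{u})}{1+\frac{u}{u_1}}+u\frac{(1-\frac{u_{-2}}{u})(1+\frac{u}{u_1})}{1+\frac{u_{-1}}{u}}$, with $w=-\frac{u}{u_1}-1$; (i) for a constant $\gamma\neq0$ with $\gamma^2\neq-1$: $-\frac{1}{1+\gamma^2}u_{,t}=\frac{(u-\gamma u_{-1})(u-\gamma u_1)(u-\gamma^{-2}u_2)}{(\gamma u_{-1}-u)(\gamma u_1-u_2)-(\gamma u-u_1)(u_{-1}-\gamma u_2)}-\frac{(u-\gamma^{-1}u_{-1})(u-\gamma^{-1}u_1)(u-\gamma^2u_{-2})}{(\gamma u_{-2}-u_{-1})(\gamma u-u_1)-(\gamma u_{-1}-u)(u_{-2}-\gamma u_1)}$, with $w=\frac{\gamma(u-(\gamma^{-1}+\gamma)u_1+u_2)(u_1-(\gamma^{-1}+\gamma)u_2+u_3)}{(\gamma u-u_1)(\gamma u_2-u_3)-(\gamma u_1-u_2)(u-\gamma u_3)}$.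
   Context: Here $u=u(n,t)$, $u_m=u(n+m,t)$, $w=w(n,t)$, $w_m=w(n+m,t)$ for $n\in\mathbb Z$, and ${,t}$ denotes $\partial/\partial t$. *)

theory Defs
  imports "HOL-Analysis.Analysis"
begin

text \<open>Fields u :: int => real => complex, u n t = u(n,t).  A "local value" v :: int => complex
  stands for the shifted values, v m = u_m = u(n+m,t).\<close>

type_synonym field = "int \<Rightarrow> real \<Rightarrow> complex"

definition shifts :: "field \<Rightarrow> int \<Rightarrow> real \<Rightarrow> int \<Rightarrow> complex" where
  "shifts u n t = (\<lambda>m. u (n + m) t)"

definition lattice_solution ::
  "((int \<Rightarrow> complex) \<Rightarrow> complex) \<Rightarrow> ((int \<Rightarrow> complex) \<Rightarrow> bool) \<Rightarrow> field \<Rightarrow> bool" where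
  "lattice_solution F nd u \<longleftrightarrow>
     (\<forall>n t. nd (shifts u n t)) \<and>
     (\<forall>n t. ((\<lambda>s. u n s) has_vector_derivative F (shifts u n t)) (at t))"

definition W_rhs :: "(int \<Rightarrow> complex) \<Rightarrow> complex" where
  "W_rhs v = (v 0 + 1) * (v 2 * (1 / v 1 + 1) * v 0 - v 0 * (1 / v (-1) + 1) * v (-2)
                          + v 1 - v (-1))"

definition W_solution :: "field \<Rightarrow> bool" where
  "W_solution w \<longleftrightarrow>
     (\<forall>n t. ((\<lambda>s. w n s) has_vector_derivative W_rhs (shifts w n t)) (at t))"

definition transform :: "((int \<Rightarrow> complex) \<Rightarrow> complex) \<Rightarrow> field \<Rightarrow> field" where
  "transform G u = (\<lambda>n t. G (shifts u n t))"

definition maps_to_W ::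
  "((int \<Rightarrow> complex) \<Rightarrow> complex) \<Rightarrow> ((int \<Rightarrow> complex) \<Rightarrow> bool) \<Rightarrow>
   ((int \<Rightarrow> complex) \<Rightarrow> complex) \<Rightarrow> ((int \<Rightarrow> complex) \<Rightarrow> bool) \<Rightarrow> bool" where
  "maps_to_W F ndF G ndG \<longleftrightarrow>
     (\<forall>u. lattice_solution F ndF u \<and> (\<forall>n t. ndG (shifts u n t))
          \<and> (\<forall>n t. transform G u n t \<noteq> 0)
        \<longrightarrow> W_solution (transform G u))"

definition F_a :: "(int \<Rightarrow> complex) \<Rightarrow> complex" where
  "F_a v = 2 * (1 / (2 / (v 2 - v 0) + 1 / (v 0 - v 1) + 1 / (v 0 - v (-1)))
              - 1 / (2 / (v (-2) - v 0) + 1 / (v 0 - v 1) + 1 / (v 0 - v (-1))))"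
definition ndF_a :: "(int \<Rightarrow> complex) \<Rightarrow> bool" where
  "ndF_a v \<longleftrightarrow> v 2 - v 0 \<noteq> 0 \<and> v 0 - v 1 \<noteq> 0 \<and> v 0 - v (-1) \<noteq> 0 \<and> v (-2) - v 0 \<noteq> 0 \<and>
     2 / (v 2 - v 0) + 1 / (v 0 - v 1) + 1 / (v 0 - v (-1)) \<noteq> 0 \<and>
     2 / (v (-2) - v 0) + 1 / (v 0 - v 1) + 1 / (v 0 - v (-1)) \<noteq> 0"
definition G_a :: "(int \<Rightarrow> complex) \<Rightarrow> complex" where
  "G_a v = 1 / (2 * ((v 3 - v 2) * (v 1 - v 0)) / ((v 3 - v 1) * (v 2 - v 0)) - 1)"
definition ndG_a :: "(int \<Rightarrow> complex) \<Rightarrow> bool" where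
  "ndG_a v \<longleftrightarrow> (v 3 - v 1) * (v 2 - v 0) \<noteq> 0 \<and>
     2 * ((v 3 - v 2) * (v 1 - v 0)) / ((v 3 - v 1) * (v 2 - v 0)) - 1 \<noteq> 0"

definition F_c :: "(int \<Rightarrow> complex) \<Rightarrow> complex" where
  "F_c v = 4 * (1 / (((v 2 - v 0 + 2) * (v 1 - v 0 - 1) * (v (-1) - v 0 - 1)) /
                     ((v 2 - v 0 - 2) * (v 1 - v 0 + 1) * (v (-1) - v 0 + 1)) - 1)
              + 1 / (((v (-2) - v 0 - 2) * (v 1 - v 0 + 1) * (v (-1) - v 0 + 1)) /
                     ((v (-2) - v 0 + 2) * (v 1 - v 0 - 1) * (v (-1) - v 0 - 1)) - 1))"
definition ndF_c :: "(int \<Rightarrow> complex) \<Rightarrow> bool" where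
  "ndF_c v \<longleftrightarrow> (v 2 - v 0 - 2) * (v 1 - v 0 + 1) * (v (-1) - v 0 + 1) \<noteq> 0 \<and>
     (v (-2) - v 0 + 2) * (v 1 - v 0 - 1) * (v (-1) - v 0 - 1) \<noteq> 0 \<and>
     ((v 2 - v 0 + 2) * (v 1 - v 0 - 1) * (v (-1) - v 0 - 1)) /
       ((v 2 - v 0 - 2) * (v 1 - v 0 + 1) * (v (-1) - v 0 + 1)) - 1 \<noteq> 0 \<and>
     ((v (-2) - v 0 - 2) * (v 1 - v 0 + 1) * (v (-1) - v 0 + 1)) /
       ((v (-2) - v 0 + 2) * (v 1 - v 0 - 1) * (v (-1) - v 0 - 1)) - 1 \<noteq> 0"
definition G_c :: "(int \<Rightarrow> complex) \<Rightarrow> complex" where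
  "G_c v = ((v 3 - 2 * v 2 + v 1) * (v 2 - 2 * v 1 + v 0)) /
           (2 - 2 * (v 2 - v 1)^2 - (v 3 - 2 * v 2 + v 1) * (v 2 - 2 * v 1 + v 0))"
definition ndG_c :: "(int \<Rightarrow> complex) \<Rightarrow> bool" where
  "ndG_c v \<longleftrightarrow> 2 - 2 * (v 2 - v 1)^2 - (v 3 - 2 * v 2 + v 1) * (v 2 - 2 * v 1 + v 0) \<noteq> 0"

definition F_d :: "(int \<Rightarrow> complex) \<Rightarrow> complex" where
  "F_d v = (v 0 - v (-1)) / (v 1 - v (-1) + (v 0 - v 1) / (v 0 - v 2))
         - (v 0 - v 1) / (v 1 - v (-1) + (v 0 - v (-1)) / (v 0 - v (-2)))"
definition ndF_d :: "(int \<Rightarrow> complex) \<Rightarrow> bool" where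
  "ndF_d v \<longleftrightarrow> v 0 - v 2 \<noteq> 0 \<and> v 0 - v (-2) \<noteq> 0 \<and>
     v 1 - v (-1) + (v 0 - v 1) / (v 0 - v 2) \<noteq> 0 \<and>
     v 1 - v (-1) + (v 0 - v (-1)) / (v 0 - v (-2)) \<noteq> 0"
definition G_d :: "(int \<Rightarrow> complex) \<Rightarrow> complex" where
  "G_d v = - (1 / (1 + (v 2 - v 1) / ((v 3 - v 1) * (v 2 - v 0))))"
definition ndG_d :: "(int \<Rightarrow> complex) \<Rightarrow> bool" where
  "ndG_d v \<longleftrightarrow> (v 3 - v 1) * (v 2 - v 0) \<noteq> 0 \<and>
     1 + (v 2 - v 1) / ((v 3 - v 1) * (v 2 - v 0)) \<noteq> 0"

definition F_f :: "(int \<Rightarrow> complex) \<Rightarrow> complex" where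
  "F_f v = v 0 * ((1 - v 0 / v 2) * (1 - v (-1) / v 0)) / (1 - v 0 / v 1)
         + v 0 * ((1 - v (-2) / v 0) * (1 - v 0 / v 1)) / (1 - v (-1) / v 0)"
definition ndF_f :: "(int \<Rightarrow> complex) \<Rightarrow> bool" where
  "ndF_f v \<longleftrightarrow> v 0 \<noteq> 0 \<and> v 1 \<noteq> 0 \<and> v 2 \<noteq> 0 \<and>
     1 - v 0 / v 1 \<noteq> 0 \<and> 1 - v (-1) / v 0 \<noteq> 0"
definition G_f :: "(int \<Rightarrow> complex) \<Rightarrow> complex" where
  "G_f v = v 0 / v 1 - 1"
definition ndG_f :: "(int \<Rightarrow> complex) \<Rightarrow> bool" where
  "ndG_f v \<longleftrightarrow> v 1 \<noteq> 0"

definition F_h :: "(int \<Rightarrow> complex) \<Rightarrow> complex" where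
  "F_h v = v 0 * ((1 - v 0 / v 2) * (1 + v (-1) / v 0)) / (1 + v 0 / v 1)
         + v 0 * ((1 - v (-2) / v 0) * (1 + v 0 / v 1)) / (1 + v (-1) / v 0)"
definition ndF_h :: "(int \<Rightarrow> complex) \<Rightarrow> bool" where
  "ndF_h v \<longleftrightarrow> v 0 \<noteq> 0 \<and> v 1 \<noteq> 0 \<and> v 2 \<noteq> 0 \<and>
     1 + v 0 / v 1 \<noteq> 0 \<and> 1 + v (-1) / v 0 \<noteq> 0"
definition G_h :: "(int \<Rightarrow> complex) \<Rightarrow> complex" where
  "G_h v = - (v 0 / v 1) - 1"
definition ndG_h :: "(int \<Rightarrow> complex) \<Rightarrow> bool" where
  "ndG_h v \<longleftrightarrow> v 1 \<noteq> 0"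

definition D1_i :: "complex \<Rightarrow> (int \<Rightarrow> complex) \<Rightarrow> complex" where
  "D1_i g v = (g * v (-1) - v 0) * (g * v 1 - v 2) - (g * v 0 - v 1) * (v (-1) - g * v 2)"
definition D2_i :: "complex \<Rightarrow> (int \<Rightarrow> complex) \<Rightarrow> complex" where
  "D2_i g v = (g * v (-2) - v (-1)) * (g * v 0 - v 1) - (g * v (-1) - v 0) * (v (-2) - g * v 1)"

text \<open>The equation -(1/(1+g^2)) u_t = RHS is solved for u_t (valid since g^2 \<noteq> -1).\<close>
definition F_i :: "complex \<Rightarrow> (int \<Rightarrow> complex) \<Rightarrow> complex" where
  "F_i g v = - (1 + g^2) *
     ((v 0 - g * v (-1)) * (v 0 - g * v 1) * (v 0 - inverse (g^2) * v 2) / D1_i g v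
    - (v 0 - inverse g * v (-1)) * (v 0 - inverse g * v 1) * (v 0 - g^2 * v (-2)) / D2_i g v)"
definition ndF_i :: "complex \<Rightarrow> (int \<Rightarrow> complex) \<Rightarrow> bool" where
  "ndF_i g v \<longleftrightarrow> D1_i g v \<noteq> 0 \<and> D2_i g v \<noteq> 0"
definition G_i :: "complex \<Rightarrow> (int \<Rightarrow> complex) \<Rightarrow> complex" where
  "G_i g v = g * (v 0 - (inverse g + g) * v 1 + v 2) * (v 1 - (inverse g + g) * v 2 + v 3) /
     ((g * v 0 - v 1) * (g * v 2 - v 3) - (g * v 1 - v 2) * (v 0 - g * v 3))"
definition ndG_i :: "complex \<Rightarrow> (int \<Rightarrow> complex) \<Rightarrow> bool" where
  "ndG_i g v \<longleftrightarrow> (g * v 0 - v 1) * (g * v 2 - v 3) - (g * v 1 - v 2) * (v 0 - g * v 3) \<noteq> 0"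

end

theory Submission
  imports Defs
begin

(* Write x k for u(n + k, t).  Each transformation is w = G(x 0, ..., x 3), so by the chain rule
   w_t is the sum over k of (dG/dx_k) F(shift k x), and the theorem becomes a rational identity
   in the values x k.

   In cases (a), (c), (d), (i), G = N/M with polynomials N and M, and the right-hand side of the
   lattice equation is F = A/M(shift (-1) x) - B/M(shift (-2) x): its poles are zeros of shifted
   copies of M.  Both sides of the identity then only have poles at M(shift j x), j = -2..2, so it
   suffices to compare them pole by pole, which leaves five polynomial identities whose
   polynomial remainders cancel.

   In cases (f) and (h), w + 1 = e u_0/u_1 with e = 1 or e = -1, and u_t/u is a function of the
   ratios p_j = e u_j/u_(j+1).  Hence w_t/(w + 1) is the difference of two values of that
   function, an identity in five variables. *)

section \<open>Lattice transformations and the chain rule\<close>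

type_synonym local_values = "int \<Rightarrow> complex"

definition shift :: "int \<Rightarrow> (int \<Rightarrow> 'a) \<Rightarrow> int \<Rightarrow> 'a" where
  "shift j x = (\<lambda>m. x (j + m))"

lemma shift_apply [simp]: "shift j x m = x (j + m)"
  by (simp add: shift_def)

lemma shift_0 [simp]: "shift 0 x = x"
  by (simp add: shift_def)

lemma shift_shift [simp]: "shift i (shift j x) = shift (j + i) x"
  by (simp add: shift_def add.assoc)

lemma shifts_add: "shifts u (n + j) t = shift j (shifts u n t)"
  by (simp add: shifts_def shift_def add.assoc)

lemma sum_lessThan_4: "(\<Sum>k<4::nat. f k) = f 0 + f 1 + f 2 + (f 3 :: 'a :: comm_monoid_add)"
  by (simp add: eval_nat_numeral)

definition has_lattice_partials ::
  "(local_values \<Rightarrow> complex) \<Rightarrow> (nat \<Rightarrow> local_values \<Rightarrow> complex) \<Rightarrow>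
   (local_values \<Rightarrow> bool) \<Rightarrow> bool" where
  "has_lattice_partials G D nd \<longleftrightarrow>
     (\<forall>u n t y. (\<forall>s. nd (shifts u n s)) \<and>
        (\<forall>k<4. ((\<lambda>s. u (n + int k) s) has_vector_derivative y k) (at t)) \<longrightarrow>
        ((\<lambda>s. G (shifts u n s)) has_vector_derivative (\<Sum>k<4. D k (shifts u n t) * y k)) (at t))"

lemma has_lattice_partialsI:
  assumes "\<And>u n t y0 y1 y2 y3. (\<And>s. nd (shifts u n s)) \<Longrightarrow>
      ((\<lambda>s. u n s) has_vector_derivative y0) (at t) \<Longrightarrow>
      ((\<lambda>s. u (n + 1) s) has_vector_derivative y1) (at t) \<Longrightarrow>
      ((\<lambda>s. u (n + 2) s) has_vector_derivative y2) (at t) \<Longrightarrow>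
      ((\<lambda>s. u (n + 3) s) has_vector_derivative y3) (at t) \<Longrightarrow>
      ((\<lambda>s. G (shifts u n s)) has_vector_derivative
        (D 0 (shifts u n t) * y0 + D 1 (shifts u n t) * y1 + D 2 (shifts u n t) * y2
         + D 3 (shifts u n t) * y3)) (at t)"
  shows "has_lattice_partials G D nd"
  unfolding has_lattice_partials_def
proof (intro allI impI, elim conjE)
  fix u n t y
  assume nd: "\<forall>s. nd (shifts u n s)"
    and y: "\<forall>k<4. ((\<lambda>s. u (n + int k) s) has_vector_derivative y k) (at t)"
  then have "((\<lambda>s. u (n + int k) s) has_vector_derivative y k) (at t)" if "k < 4" for k
    using that by blast
  from assms[OF _ this[of 0, simplified] this[of 1, simplified] this[of 2, simplified]
      this[of 3, simplified]] nd
  show "((\<lambda>s. G (shifts u n s)) has_vector_derivative (\<Sum>k<4. D k (shifts u n t) * y k)) (at t)"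
    by (simp add: sum_lessThan_4)
qed

lemma has_lattice_partials_cong:
  assumes "\<And>x. nd x \<Longrightarrow> G x = G' x" and "has_lattice_partials G' D nd"
  shows "has_lattice_partials G D nd"
  unfolding has_lattice_partials_def
proof (intro allI impI)
  fix u n t y
  assume H: "(\<forall>s. nd (shifts u n s)) \<and>
    (\<forall>k<4. ((\<lambda>s. u (n + int k) s) has_vector_derivative y k) (at t))"
  then have "(\<lambda>s. G (shifts u n s)) = (\<lambda>s. G' (shifts u n s))"
    using assms(1) by auto
  then show "((\<lambda>s. G (shifts u n s)) has_vector_derivative (\<Sum>k<4. D k (shifts u n t) * y k)) (at t)"
    using assms(2) H unfolding has_lattice_partials_def by simp
qed

lemma maps_to_W_by_partials:
  assumes partials: "has_lattice_partials G D ndG"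
    and identity: "\<And>x. (\<And>j. ndF (shift j x)) \<Longrightarrow> (\<And>j. ndG (shift j x)) \<Longrightarrow>
      (\<And>j. G (shift j x) \<noteq> 0) \<Longrightarrow>
      (\<Sum>k<4. D k x * F (shift (int k) x)) = W_rhs (\<lambda>j. G (shift j x))"
  shows "maps_to_W F ndF G ndG"
  unfolding maps_to_W_def W_solution_def
proof (intro allI impI, elim conjE)
  fix u n t
  assume sol: "lattice_solution F ndF u" and ndG: "\<forall>n t. ndG (shifts u n t)"
    and nz: "\<forall>n t. transform G u n t \<noteq> 0"
  define x where "x = shifts u n t"
  have x_shift: "shifts u (n + j) t = shift j x" for j
    by (simp add: x_def shifts_add)
  have "\<forall>k<4. ((\<lambda>s. u (n + int k) s) has_vector_derivative F (shift (int k) x)) (at t)"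
    using sol by (simp add: lattice_solution_def flip: x_shift)
  then have "((\<lambda>s. G (shifts u n s)) has_vector_derivative (\<Sum>k<4. D k x * F (shift (int k) x))) (at t)"
    using partials[unfolded has_lattice_partials_def, rule_format, where u = u and n = n and t = t] ndG
    by (simp add: x_def)
  moreover have "(\<Sum>k<4. D k x * F (shift (int k) x)) = W_rhs (\<lambda>j. G (shift j x))"
    using sol ndG nz by (intro identity) (auto simp: lattice_solution_def transform_def simp flip: x_shift)
  moreover have "shifts (transform G u) n t = (\<lambda>j. G (shift j x))"
    by (simp add: fun_eq_iff transform_def flip: x_shift) (simp add: shifts_def)
  ultimately show "((\<lambda>s. transform G u n s) has_vector_derivative
      W_rhs (shifts (transform G u) n t)) (at t)"
    by (simp add: transform_def)
qed

lemma has_vector_derivative_quotient: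
  fixes f g :: "real \<Rightarrow> complex"
  assumes "(f has_vector_derivative f') (at t)" "(g has_vector_derivative g') (at t)" "g t \<noteq> 0"
  shows "((\<lambda>s. f s / g s) has_vector_derivative (f' * g t - f t * g') / (g t)^2) (at t)"
proof -
  have "((\<lambda>s. f s / g s) has_derivative
      (\<lambda>h. ((h *\<^sub>R f') * g t - f t * (h *\<^sub>R g')) / (g t * g t))) (at t)"
    using has_derivative_divide'[OF assms(1,2)[unfolded has_vector_derivative_def] assms(3)] .
  then show ?thesis
    unfolding has_vector_derivative_def
    by (rule has_derivative_eq_rhs)
      (auto simp: fun_eq_iff scaleR_conv_of_real power2_eq_square field_simps)
qed

lemma vector_derivative_eq_rhs:
  "(f has_vector_derivative D') F \<Longrightarrow> D' = D \<Longrightarrow> (f has_vector_derivative D) F"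
  by simp

lemmas polynomial_vector_derivative_intros =
  has_vector_derivative_mult has_vector_derivative_add has_vector_derivative_diff
  has_vector_derivative_minus has_vector_derivative_const

section \<open>Transformations of quotient type\<close>

definition quotient_rule_numerator ::
  "(local_values \<Rightarrow> complex) \<Rightarrow> (local_values \<Rightarrow> complex) \<Rightarrow>
   (nat \<Rightarrow> local_values \<Rightarrow> complex) \<Rightarrow> (nat \<Rightarrow> local_values \<Rightarrow> complex) \<Rightarrow>
   nat \<Rightarrow> local_values \<Rightarrow> complex" where
  "quotient_rule_numerator N M dN dM k x = dN k x * M x - N x * dM k x"

lemma has_lattice_partials_divide:
  assumes N: "has_lattice_partials N dN nd" and M: "has_lattice_partials M dM nd"
    and M_nz: "\<And>x. nd x \<Longrightarrow> M x \<noteq> 0"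
  shows "has_lattice_partials (\<lambda>x. N x / M x)
    (\<lambda>k x. quotient_rule_numerator N M dN dM k x / (M x)^2) nd"
  unfolding has_lattice_partials_def
proof (intro allI impI)
  fix u n t y
  assume H: "(\<forall>s. nd (shifts u n s)) \<and>
    (\<forall>k<4. ((\<lambda>s. u (n + int k) s) has_vector_derivative y k) (at t))"
  let ?x = "shifts u n t"
  have "((\<lambda>s. N (shifts u n s) / M (shifts u n s)) has_vector_derivative
      ((\<Sum>k<4. dN k ?x * y k) * M ?x - N ?x * (\<Sum>k<4. dM k ?x * y k)) / (M ?x)^2) (at t)"
    using H N M M_nz unfolding has_lattice_partials_def
    by (intro has_vector_derivative_quotient) blast+
  then show "((\<lambda>s. N (shifts u n s) / M (shifts u n s)) has_vector_derivative
      (\<Sum>k<4. quotient_rule_numerator N M dN dM k ?x / (M ?x)^2 * y k)) (at t)"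
    by (simp add: quotient_rule_numerator_def sum_lessThan_4 add_divide_distrib
        diff_divide_distrib algebra_simps)
qed

text \<open>For \<open>G = N / M\<close> and \<open>F = A / M (shift (-1) x) - B / M (shift (-2) x)\<close>, each
  identity below matches the terms of both sides of the chain rule identity that have the pole
  \<open>M (shift j x)\<close>, up to a polynomial remainder \<open>R j x\<close>; the remainders cancel.\<close>

definition quotient_residues ::
  "(local_values \<Rightarrow> complex) \<Rightarrow> (local_values \<Rightarrow> complex) \<Rightarrow>
   (local_values \<Rightarrow> complex) \<Rightarrow> (local_values \<Rightarrow> complex) \<Rightarrow>
   (nat \<Rightarrow> local_values \<Rightarrow> complex) \<Rightarrow> (nat \<Rightarrow> local_values \<Rightarrow> complex) \<Rightarrow>
   (int \<Rightarrow> local_values \<Rightarrow> complex) \<Rightarrow> bool" where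
  "quotient_residues N M A B dN dM R \<longleftrightarrow> (\<forall>x.
     let K = (\<lambda>k. quotient_rule_numerator N M dN dM k x);
         N' = (\<lambda>j. N (shift j x)); M' = (\<lambda>j. M (shift j x));
         A' = (\<lambda>j. A (shift j x)); B' = (\<lambda>j. B (shift j x))
     in K 3 * A' 3 * N' 1 - N' 0 * (M' 0 + N' 0) * N' 2 * (M' 1 + N' 1) = R 2 x * M' 2 * N' 1 \<and>
        N' 0 * (M' 0 + N' 0) * N' (-2) * (M' (-1) + N' (-1)) - K 0 * B' 0 * N' (-1)
          = R (-2) x * M' (-2) * N' (-1) \<and>
        K 2 * A' 2 - K 3 * B' 3 - (M' 0 + N' 0) * M' 0 * N' 1 = R 1 x * M' 1 \<and>
        K 0 * A' 0 - K 1 * B' 1 + (M' 0 + N' 0) * M' 0 * N' (-1) = R (-1) x * M' (-1) \<and>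
        K 1 * A' 1 - K 2 * B' 2 = R 0 x * M' 0 \<and>
        R (-2) x + R (-1) x + R 0 x + R 1 x + R 2 x = 0)"

lemma W_rhs_partial_fractions:
  fixes Nm2 Nm1 N0 N1 N2 Mm2 Mm1 M0 M1 M2 K0 K1 K2 K3 A0 A1 A2 A3 B0 B1 B2 B3
    Rm2 Rm1 R0 R1 R2 :: complex
  assumes nz: "Mm2 \<noteq> 0" "Mm1 \<noteq> 0" "M0 \<noteq> 0" "M1 \<noteq> 0" "M2 \<noteq> 0"
      "Nm2 \<noteq> 0" "Nm1 \<noteq> 0" "N0 \<noteq> 0" "N1 \<noteq> 0" "N2 \<noteq> 0"
    and res2: "K3 * A3 * N1 - N0 * (M0 + N0) * N2 * (M1 + N1) = R2 * M2 * N1"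
    and resm2: "N0 * (M0 + N0) * Nm2 * (Mm1 + Nm1) - K0 * B0 * Nm1 = Rm2 * Mm2 * Nm1"
    and res1: "K2 * A2 - K3 * B3 - (M0 + N0) * M0 * N1 = R1 * M1"
    and resm1: "K0 * A0 - K1 * B1 + (M0 + N0) * M0 * Nm1 = Rm1 * Mm1"
    and res0: "K1 * A1 - K2 * B2 = R0 * M0"
    and sum: "Rm2 + Rm1 + R0 + R1 + R2 = 0"
  shows "K0 / M0^2 * (A0 / Mm1 - B0 / Mm2) + K1 / M0^2 * (A1 / M0 - B1 / Mm1)
       + K2 / M0^2 * (A2 / M1 - B2 / M0) + K3 / M0^2 * (A3 / M2 - B3 / M1)
     = (N0 / M0 + 1) * (N2 / M2 * (1 / (N1 / M1) + 1) * (N0 / M0)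
         - N0 / M0 * (1 / (Nm1 / Mm1) + 1) * (Nm2 / Mm2) + N1 / M1 - Nm1 / Mm1)"
proof -
  have "K0 / M0^2 * (A0 / Mm1 - B0 / Mm2) + K1 / M0^2 * (A1 / M0 - B1 / Mm1)
       + K2 / M0^2 * (A2 / M1 - B2 / M0) + K3 / M0^2 * (A3 / M2 - B3 / M1)
     = (K3 * A3 / M2 - K0 * B0 / Mm2 + (K2 * A2 - K3 * B3) / M1 + (K0 * A0 - K1 * B1) / Mm1
        + (K1 * A1 - K2 * B2) / M0) / M0^2"
    using nz by (simp add: field_simps)
  also have "\<dots> = (N0 * (M0 + N0) * N2 * (M1 + N1) / (M2 * N1)
        - N0 * (M0 + N0) * Nm2 * (Mm1 + Nm1) / (Mm2 * Nm1)
        + (M0 + N0) * M0 * N1 / M1 - (M0 + N0) * M0 * Nm1 / Mm1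
        + (Rm2 + Rm1 + R0 + R1 + R2)) / M0^2"
  proof -
    have e2: "K3 * A3 / M2 = N0 * (M0 + N0) * N2 * (M1 + N1) / (M2 * N1) + R2"
      using res2 nz by (simp add: field_simps)
    have em2: "K0 * B0 / Mm2 = N0 * (M0 + N0) * Nm2 * (Mm1 + Nm1) / (Mm2 * Nm1) - Rm2"
      using resm2 nz by (simp add: field_simps)
    have e1: "(K2 * A2 - K3 * B3) / M1 = (M0 + N0) * M0 * N1 / M1 + R1"
      using res1 nz by (simp add: field_simps)
    have em1: "(K0 * A0 - K1 * B1) / Mm1 = - ((M0 + N0) * M0 * Nm1 / Mm1) + Rm1"
      using resm1 nz by (simp add: field_simps)
    have e0: "(K1 * A1 - K2 * B2) / M0 = R0"
      using res0 nz by (simp add: field_simps)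
    show ?thesis
      unfolding e2 em2 e1 em1 e0 by (simp add: algebra_simps)
  qed
  also have "\<dots> = (N0 / M0 + 1) * (N2 / M2 * (1 / (N1 / M1) + 1) * (N0 / M0)
         - N0 / M0 * (1 / (Nm1 / Mm1) + 1) * (Nm2 / Mm2) + N1 / M1 - Nm1 / Mm1)"
    unfolding sum using nz by (simp add: field_simps) algebra
  finally show ?thesis .
qed

lemma W_rhs_quotient:
  assumes residues: "quotient_residues N M A B dN dM R"
    and M_nz: "\<And>j. M (shift j x) \<noteq> 0" and N_nz: "\<And>j. N (shift j x) \<noteq> 0"
    and F_poles: "\<And>k. F (shift k x)
      = A (shift k x) / M (shift (k - 1) x) - B (shift k x) / M (shift (k - 2) x)"
  shows "(\<Sum>k<4. quotient_rule_numerator N M dN dM k x / (M x)^2 * F (shift (int k) x))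
    = W_rhs (\<lambda>j. N (shift j x) / M (shift j x))"
proof -
  let ?K = "\<lambda>k. quotient_rule_numerator N M dN dM k x"
  have F0: "F x = A x / M (shift (-1) x) - B x / M (shift (-2) x)"
    and F1: "F (shift 1 x) = A (shift 1 x) / M x - B (shift 1 x) / M (shift (-1) x)"
    and F2: "F (shift 2 x) = A (shift 2 x) / M (shift 1 x) - B (shift 2 x) / M x"
    and F3: "F (shift 3 x) = A (shift 3 x) / M (shift 2 x) - B (shift 3 x) / M (shift 1 x)"
    using F_poles[of 0] F_poles[of 1] F_poles[of 2] F_poles[of 3] by simp_all
  have "(\<Sum>k<4. ?K k / (M x)^2 * F (shift (int k) x))
      = ?K 0 / (M x)^2 * (A x / M (shift (-1) x) - B x / M (shift (-2) x))
      + ?K 1 / (M x)^2 * (A (shift 1 x) / M x - B (shift 1 x) / M (shift (-1) x))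
      + ?K 2 / (M x)^2 * (A (shift 2 x) / M (shift 1 x) - B (shift 2 x) / M x)
      + ?K 3 / (M x)^2 * (A (shift 3 x) / M (shift 2 x) - B (shift 3 x) / M (shift 1 x))"
    unfolding sum_lessThan_4 of_nat_0 of_nat_1 of_nat_numeral shift_0 F0 F1 F2 F3 ..
  also have "\<dots> = W_rhs (\<lambda>j. N (shift j x) / M (shift j x))"
    unfolding W_rhs_def shift_0
    using residues[unfolded quotient_residues_def Let_def shift_0, rule_format, of x]
    by (elim conjE) (rule W_rhs_partial_fractions[OF M_nz[of "-2"] M_nz[of "-1"]
        M_nz[of 0, unfolded shift_0] M_nz[of 1] M_nz[of 2] N_nz[of "-2"] N_nz[of "-1"]
        N_nz[of 0, unfolded shift_0] N_nz[of 1] N_nz[of 2]]; assumption)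
  finally show ?thesis .
qed

lemma maps_to_W_quotient:
  assumes G: "\<And>v. ndG v \<Longrightarrow> M v \<noteq> 0 \<and> G v = N v / M v"
    and F: "\<And>v. ndF v \<Longrightarrow> F v = A v / M (shift (-1) v) - B v / M (shift (-2) v)"
    and N: "has_lattice_partials N dN ndG" and M: "has_lattice_partials M dM ndG"
    and residues: "quotient_residues N M A B dN dM R"
  shows "maps_to_W F ndF G ndG"
proof (rule maps_to_W_by_partials)
  show "has_lattice_partials G (\<lambda>k x. quotient_rule_numerator N M dN dM k x / (M x)^2) ndG"
    using G by (intro has_lattice_partials_cong[OF _ has_lattice_partials_divide[OF N M]]) auto
next
  fix x
  assume ndF: "\<And>j. ndF (shift j x)" and ndG: "\<And>j. ndG (shift j x)"
    and nz: "\<And>j. G (shift j x) \<noteq> 0"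
  have M_nz: "M (shift j x) \<noteq> 0" and N_nz: "N (shift j x) \<noteq> 0" for j
    using G[OF ndG[of j]] nz[of j] by auto
  have F_poles: "F (shift k x)
      = A (shift k x) / M (shift (k - 1) x) - B (shift k x) / M (shift (k - 2) x)" for k
    using F[OF ndF[of k]] by (simp add: add.commute)
  have G_shift: "(\<lambda>j. G (shift j x)) = (\<lambda>j. N (shift j x) / M (shift j x))"
    using G ndG by auto
  show "(\<Sum>k<4. quotient_rule_numerator N M dN dM k x / (M x)^2 * F (shift (int k) x))
      = W_rhs (\<lambda>j. G (shift j x))"
    unfolding G_shift by (rule W_rhs_quotient[OF residues M_nz N_nz F_poles])
qed

section \<open>Cases (a), (c), (d) and (i)\<close>

text \<open>Evaluates index sums such as \<open>x (-1 + 3)\<close> without rewriting the polynomials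
  around them.\<close>

lemmas shift_index_simps =
  arith_simps numeral_One add_neg_numeral_special numeral_plus_one one_plus_numeral one_add_one

definition N_a :: "local_values \<Rightarrow> complex" where
  "N_a v = (v 3 - v 1) * (v 2 - v 0)"
definition M_a :: "local_values \<Rightarrow> complex" where
  "M_a v = 2 * (v 3 - v 2) * (v 1 - v 0) - (v 3 - v 1) * (v 2 - v 0)"
definition A_a :: "local_values \<Rightarrow> complex" where
  "A_a v = 2 * (v 2 - v 0) * (v 0 - v 1) * (v 0 - v (-1))"
definition B_a :: "local_values \<Rightarrow> complex" where
  "B_a v = 2 * (v (-2) - v 0) * (v 0 - v 1) * (v 0 - v (-1))"
definition dN_a :: "nat \<Rightarrow> local_values \<Rightarrow> complex" where
  "dN_a k v = [v 1 - v 3, v 0 - v 2, v 3 - v 1, v 2 - v 0] ! k"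
definition dM_a :: "nat \<Rightarrow> local_values \<Rightarrow> complex" where
  "dM_a k v = [2 * v 2 - v 1 - v 3, 2 * v 3 - v 0 - v 2, 2 * v 0 - v 1 - v 3,
    2 * v 1 - v 0 - v 2] ! k"
definition R_a :: "int \<Rightarrow> local_values \<Rightarrow> complex" where
  "R_a j v = (if j = 1 then N_a v * (M_a v + N_a v)
     else if j = -1 then - N_a v * (M_a v + N_a v) else 0)"

lemma N_a_partials: "has_lattice_partials N_a dN_a nd"
  by (rule has_lattice_partialsI, unfold N_a_def dN_a_def shifts_def add_0_right,
      rule vector_derivative_eq_rhs, (rule polynomial_vector_derivative_intros | assumption)+,
      simp add: algebra_simps)

lemma M_a_partials: "has_lattice_partials M_a dM_a nd"
  by (rule has_lattice_partialsI, unfold M_a_def dM_a_def shifts_def add_0_right,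
      rule vector_derivative_eq_rhs, (rule polynomial_vector_derivative_intros | assumption)+,
      simp add: algebra_simps)

lemma G_a_quotient: "ndG_a v \<Longrightarrow> M_a v \<noteq> 0 \<and> G_a v = N_a v / M_a v"
  unfolding ndG_a_def G_a_def M_a_def N_a_def by (auto simp: field_simps)

lemma inverse_weighted_harmonic_sum:
  fixes a b c :: "'a :: field"
  assumes "a \<noteq> 0" "b \<noteq> 0" "c \<noteq> 0"
  shows "1 / (2 / a + 1 / b + 1 / c) = a * b * c / (2 * b * c + a * c + a * b)"
proof -
  have "2 / a + 1 / b + 1 / c = (2 * b * c + a * c + a * b) / (a * b * c)"
    using assms by (simp add: field_simps)
  then show ?thesis
    by simp
qed

lemma F_a_poles:
  assumes "ndF_a v"
  shows "F_a v = A_a v / M_a (shift (-1) v) - B_a v / M_a (shift (-2) v)"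
proof -
  have nz: "v 2 - v 0 \<noteq> 0" "v 0 - v 1 \<noteq> 0" "v 0 - v (-1) \<noteq> 0" "v (-2) - v 0 \<noteq> 0"
    using assms unfolding ndF_a_def by auto
  have "2 * (v 0 - v 1) * (v 0 - v (-1)) + (v 2 - v 0) * (v 0 - v (-1)) + (v 2 - v 0) * (v 0 - v 1)
      = M_a (shift (-1) v)"
    by (simp add: M_a_def) algebra
  moreover have "2 * (v 0 - v 1) * (v 0 - v (-1)) + (v (-2) - v 0) * (v 0 - v (-1))
      + (v (-2) - v 0) * (v 0 - v 1) = M_a (shift (-2) v)"
    by (simp add: M_a_def) algebra
  ultimately show ?thesis
    unfolding F_a_def A_a_def B_a_def inverse_weighted_harmonic_sum[OF nz(1-3)]
      inverse_weighted_harmonic_sum[OF nz(4,2,3)]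
    by (simp add: algebra_simps)
qed

definition N_c :: "local_values \<Rightarrow> complex" where
  "N_c v = (v 3 - 2 * v 2 + v 1) * (v 2 - 2 * v 1 + v 0)"
definition M_c :: "local_values \<Rightarrow> complex" where
  "M_c v = 2 - 2 * (v 2 - v 1)^2 - (v 3 - 2 * v 2 + v 1) * (v 2 - 2 * v 1 + v 0)"
definition A_c :: "local_values \<Rightarrow> complex" where
  "A_c v = 2 * ((v 2 - v 0 - 2) * (v 1 - v 0 + 1) * (v (-1) - v 0 + 1))"
definition B_c :: "local_values \<Rightarrow> complex" where
  "B_c v = 2 * ((v (-2) - v 0 + 2) * (v 1 - v 0 - 1) * (v (-1) - v 0 - 1))"
definition dN_c :: "nat \<Rightarrow> local_values \<Rightarrow> complex" where
  "dN_c k v = [v 3 - 2 * v 2 + v 1, v 0 - 4 * v 1 + 5 * v 2 - 2 * v 3,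
    v 3 - 4 * v 2 + 5 * v 1 - 2 * v 0, v 2 - 2 * v 1 + v 0] ! k"
definition dM_c :: "nat \<Rightarrow> local_values \<Rightarrow> complex" where
  "dM_c k v = [2 * v 2 - v 1 - v 3, 2 * v 3 - v 0 - v 2, 2 * v 0 - v 1 - v 3,
    2 * v 1 - v 0 - v 2] ! k"
definition R_c :: "int \<Rightarrow> local_values \<Rightarrow> complex" where
  "R_c j v = (let K = (\<lambda>k. quotient_rule_numerator N_c M_c dN_c dM_c k v) in
     if j = 2 then K 3 * (2 * v 3 - 2 * v 2 - 2)
     else if j = 1 then K 3 * (v 3 - v 1 - 2) + K 2 * (2 * v 2 - 2 * v 1 - 2)
     else if j = 0 then (K 1 + K 2) * (2 * v 2 - 2 * v 1 - 2)
     else if j = -1 then K 0 * (v 2 - v 0 - 2) + K 1 * (2 * v 2 - 2 * v 1 - 2)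
     else if j = -2 then K 0 * (2 * v 1 - 2 * v 0 - 2)
     else 0)"

lemma N_c_partials: "has_lattice_partials N_c dN_c nd"
  by (rule has_lattice_partialsI, unfold N_c_def dN_c_def shifts_def add_0_right,
      rule vector_derivative_eq_rhs, (rule polynomial_vector_derivative_intros | assumption)+,
      simp add: algebra_simps)

lemma M_c_partials: "has_lattice_partials M_c dM_c nd"
  by (rule has_lattice_partialsI, unfold M_c_def dM_c_def shifts_def add_0_right power2_eq_square,
      rule vector_derivative_eq_rhs, (rule polynomial_vector_derivative_intros | assumption)+,
      simp add: algebra_simps)

lemma G_c_quotient: "ndG_c v \<Longrightarrow> M_c v \<noteq> 0 \<and> G_c v = N_c v / M_c v"
  unfolding ndG_c_def G_c_def M_c_def N_c_def by simp

lemma inverse_ratio_minus_one: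
  fixes P Q :: "'a :: field"
  assumes "Q \<noteq> 0"
  shows "1 / (P / Q - 1) = Q / (P - Q)"
  using assms by (simp add: field_simps)

lemma F_c_poles:
  assumes "ndF_c v"
  shows "F_c v = A_c v / M_c (shift (-1) v) - B_c v / M_c (shift (-2) v)"
proof -
  let ?P = "(v 2 - v 0 + 2) * (v 1 - v 0 - 1) * (v (-1) - v 0 - 1)"
  let ?Q = "(v 2 - v 0 - 2) * (v 1 - v 0 + 1) * (v (-1) - v 0 + 1)"
  let ?R = "(v (-2) - v 0 - 2) * (v 1 - v 0 + 1) * (v (-1) - v 0 + 1)"
  let ?S = "(v (-2) - v 0 + 2) * (v 1 - v 0 - 1) * (v (-1) - v 0 - 1)"
  have Q: "?Q \<noteq> 0" and S: "?S \<noteq> 0"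
    using assms unfolding ndF_c_def by auto
  have PQ: "?P - ?Q = 2 * M_c (shift (-1) v)" and RS: "?R - ?S = - 2 * M_c (shift (-2) v)"
    by (simp_all add: M_c_def) algebra+
  have "4 * (a / (2 * m) + b / (- 2 * m')) = 2 * a / m - 2 * b / m'" for a b m m' :: complex
    by (simp add: algebra_simps)
  then show ?thesis
    unfolding F_c_def inverse_ratio_minus_one[OF Q] inverse_ratio_minus_one[OF S] PQ RS
      A_c_def B_c_def .
qed

definition N_d :: "local_values \<Rightarrow> complex" where
  "N_d v = - ((v 3 - v 1) * (v 2 - v 0))"
definition M_d :: "local_values \<Rightarrow> complex" where
  "M_d v = (v 3 - v 1) * (v 2 - v 0) + (v 2 - v 1)"
definition A_d :: "local_values \<Rightarrow> complex" where
  "A_d v = (v 0 - v (-1)) * (v 2 - v 0)"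
definition B_d :: "local_values \<Rightarrow> complex" where
  "B_d v = (v 0 - v 1) * (v 0 - v (-2))"
definition dN_d :: "nat \<Rightarrow> local_values \<Rightarrow> complex" where
  "dN_d k v = [v 3 - v 1, v 2 - v 0, v 1 - v 3, v 0 - v 2] ! k"
definition dM_d :: "nat \<Rightarrow> local_values \<Rightarrow> complex" where
  "dM_d k v = [v 1 - v 3, v 0 - v 2 - 1, v 3 - v 1 + 1, v 2 - v 0] ! k"
definition R_d :: "int \<Rightarrow> local_values \<Rightarrow> complex" where
  "R_d j v = (let K = (\<lambda>k. quotient_rule_numerator N_d M_d dN_d dM_d k v) in
     if j = 1 then K 3 * (v 1 - v 3) else if j = -1 then K 0 * (v 0 - v 2) else 0)"

lemma N_d_partials: "has_lattice_partials N_d dN_d nd"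
  by (rule has_lattice_partialsI, unfold N_d_def dN_d_def shifts_def add_0_right,
      rule vector_derivative_eq_rhs, (rule polynomial_vector_derivative_intros | assumption)+,
      simp add: algebra_simps)

lemma M_d_partials: "has_lattice_partials M_d dM_d nd"
  by (rule has_lattice_partialsI, unfold M_d_def dM_d_def shifts_def add_0_right,
      rule vector_derivative_eq_rhs, (rule polynomial_vector_derivative_intros | assumption)+,
      simp add: algebra_simps)

lemma G_d_quotient: "ndG_d v \<Longrightarrow> M_d v \<noteq> 0 \<and> G_d v = N_d v / M_d v"
  unfolding ndG_d_def G_d_def M_d_def N_d_def by (auto simp: field_simps)

lemma divide_add_fraction:
  fixes p q r s :: "'a :: field"
  assumes "s \<noteq> 0"
  shows "p / (q + r / s) = p * s / (q * s + r)"
  using assms by (simp add: field_simps)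

lemma F_d_poles:
  assumes "ndF_d v"
  shows "F_d v = A_d v / M_d (shift (-1) v) - B_d v / M_d (shift (-2) v)"
proof -
  have s: "v 0 - v 2 \<noteq> 0" "v 0 - v (-2) \<noteq> 0"
    using assms unfolding ndF_d_def by auto
  have M1: "(v 1 - v (-1)) * (v 0 - v 2) + (v 0 - v 1) = - M_d (shift (-1) v)"
    and M2: "(v 1 - v (-1)) * (v 0 - v (-2)) + (v 0 - v (-1)) = M_d (shift (-2) v)"
    by (simp_all add: M_d_def) algebra+
  show ?thesis
    unfolding F_d_def divide_add_fraction[OF s(1)] divide_add_fraction[OF s(2)] M1 M2
      A_d_def B_d_def by (simp add: minus_divide_left algebra_simps)
qed

definition P_i :: "complex \<Rightarrow> local_values \<Rightarrow> complex" where
  "P_i g v = g * v 0 - (1 + g^2) * v 1 + g * v 2"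
definition Q_i :: "complex \<Rightarrow> local_values \<Rightarrow> complex" where
  "Q_i g v = g * v 1 - (1 + g^2) * v 2 + g * v 3"
definition D_i :: "complex \<Rightarrow> local_values \<Rightarrow> complex" where
  "D_i g v = (g * v 0 - v 1) * (g * v 2 - v 3) - (g * v 1 - v 2) * (v 0 - g * v 3)"
definition dPQ_i :: "complex \<Rightarrow> nat \<Rightarrow> local_values \<Rightarrow> complex" where
  "dPQ_i g k v = [g, - (1 + g^2), g, 0] ! k * Q_i g v + P_i g v * [0, g, - (1 + g^2), g] ! k"
definition dD_i :: "complex \<Rightarrow> nat \<Rightarrow> local_values \<Rightarrow> complex" where
  "dD_i g k v = [g * (g * v 2 - v 3) - (g * v 1 - v 2), - (g * v 2 - v 3) - g * (v 0 - g * v 3),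
     g * (g * v 0 - v 1) + (v 0 - g * v 3), g * (g * v 1 - v 2) - (g * v 0 - v 1)] ! k"

definition N_i :: "complex \<Rightarrow> local_values \<Rightarrow> complex" where
  "N_i g v = g * (P_i g v * Q_i g v)"
definition M_i :: "complex \<Rightarrow> local_values \<Rightarrow> complex" where
  "M_i g v = g^2 * D_i g v"
definition A_i :: "complex \<Rightarrow> local_values \<Rightarrow> complex" where
  "A_i g v = - (1 + g^2) * (v 0 - g * v (-1)) * (v 0 - g * v 1) * (g^2 * v 0 - v 2)"
definition B_i :: "complex \<Rightarrow> local_values \<Rightarrow> complex" where
  "B_i g v = - (1 + g^2) * (g * v 0 - v (-1)) * (g * v 0 - v 1) * (v 0 - g^2 * v (-2))"
definition dN_i :: "complex \<Rightarrow> nat \<Rightarrow> local_values \<Rightarrow> complex" where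
  "dN_i g k v = g * dPQ_i g k v"
definition dM_i :: "complex \<Rightarrow> nat \<Rightarrow> local_values \<Rightarrow> complex" where
  "dM_i g k v = g^2 * dD_i g k v"

text \<open>The remainders are expressed through the quotient rule numerator of
  \<open>P_i g * Q_i g / D_i g\<close>, which is that of \<open>N_i g / M_i g\<close> divided by \<open>g^3\<close>; in terms
  of the latter they would need a factor \<open>1 / g^2\<close>.\<close>

definition R_i :: "complex \<Rightarrow> int \<Rightarrow> local_values \<Rightarrow> complex" where
  "R_i g j v = (let
     K = (\<lambda>k. quotient_rule_numerator (\<lambda>v. P_i g v * Q_i g v) (D_i g) (dPQ_i g) (dD_i g) k v)
   in g * (if j = 2 then (1 + g^2) * K 3 * (v 3 - g * v 2)
     else if j = 1 then K 3 * (v 3 - g^2 * v 1) + (1 + g^2) * K 2 * (v 2 - g * v 1)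
     else if j = 0 then (1 + g^2) * (K 2 * (v 2 - g * v 1) + K 1 * (g * v 2 - g^2 * v 1))
     else if j = -1 then g^2 * K 0 * (v 2 - g^2 * v 0) - (1 + g^2) * K 1 * (g^2 * v 1 - g * v 2)
     else if j = -2 then (1 + g^2) * K 0 * (g * v 1 - g^2 * v 0)
     else 0))"

lemma N_i_partials: "has_lattice_partials (N_i g) (dN_i g) nd"
  by (rule has_lattice_partialsI, unfold N_i_def dN_i_def dPQ_i_def P_i_def Q_i_def shifts_def
      add_0_right, rule vector_derivative_eq_rhs,
      (rule polynomial_vector_derivative_intros | assumption)+, simp add: algebra_simps)

lemma M_i_partials: "has_lattice_partials (M_i g) (dM_i g) nd"
  by (rule has_lattice_partialsI, unfold M_i_def dM_i_def D_i_def dD_i_def shifts_def add_0_right,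
      rule vector_derivative_eq_rhs, (rule polynomial_vector_derivative_intros | assumption)+,
      simp add: algebra_simps)

lemma G_i_quotient:
  assumes "g \<noteq> 0" and "ndG_i g v"
  shows "M_i g v \<noteq> 0 \<and> G_i g v = N_i g v / M_i g v"
proof -
  let ?P = "v 0 - (inverse g + g) * v 1 + v 2" and ?Q = "v 1 - (inverse g + g) * v 2 + v 3"
  let ?D = "(g * v 0 - v 1) * (g * v 2 - v 3) - (g * v 1 - v 2) * (v 0 - g * v 3)"
  have "P_i g v = g * ?P" and "Q_i g v = g * ?Q"
    unfolding P_i_def Q_i_def using assms(1) by (simp_all add: field_simps power2_eq_square)
  then have "N_i g v = g^2 * (g * ?P * ?Q)"
    unfolding N_i_def by (simp add: power2_eq_square)
  moreover have "M_i g v = g^2 * ?D"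
    unfolding M_i_def D_i_def ..
  moreover have "?D \<noteq> 0"
    using assms(2) unfolding ndG_i_def .
  ultimately show ?thesis
    using assms(1) unfolding G_i_def by simp
qed

lemma F_i_poles:
  assumes "g \<noteq> 0"
  shows "F_i g v = A_i g v / M_i g (shift (-1) v) - B_i g v / M_i g (shift (-2) v)"
proof -
  have M1: "M_i g (shift (-1) v) = g^2 * D1_i g v" and M2: "M_i g (shift (-2) v) = g^2 * D2_i g v"
    by (simp_all add: M_i_def D_i_def D1_i_def D2_i_def)
  have A: "A_i g v = g^2 * (- (1 + g^2) *
      ((v 0 - g * v (-1)) * (v 0 - g * v 1) * (v 0 - inverse (g^2) * v 2)))"
    and B: "B_i g v = g^2 * (- (1 + g^2) *
      ((v 0 - inverse g * v (-1)) * (v 0 - inverse g * v 1) * (v 0 - g^2 * v (-2))))"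
    unfolding A_i_def B_i_def using assms by (simp_all add: field_simps power2_eq_square)
  have "- c * (X / D1 - Y / D2) = g^2 * (- c * X) / (g^2 * D1) - g^2 * (- c * Y) / (g^2 * D2)"
    for c X Y D1 D2 :: complex
    using assms by (simp add: algebra_simps)
  then show ?thesis
    unfolding F_i_def M1 M2 A B .
qed

section \<open>Cases (f) and (h)\<close>

definition F_ratio :: "complex \<Rightarrow> local_values \<Rightarrow> complex" where
  "F_ratio e v = v 0 * ((1 - v 0 / v 2) * (1 - e * (v (-1) / v 0))) / (1 - e * (v 0 / v 1))
     + v 0 * ((1 - v (-2) / v 0) * (1 - e * (v 0 / v 1))) / (1 - e * (v (-1) / v 0))"
definition ndF_ratio :: "complex \<Rightarrow> local_values \<Rightarrow> bool" where
  "ndF_ratio e v \<longleftrightarrow> v 0 \<noteq> 0 \<and> v 1 \<noteq> 0 \<and> v 2 \<noteq> 0 \<and>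
     1 - e * (v 0 / v 1) \<noteq> 0 \<and> 1 - e * (v (-1) / v 0) \<noteq> 0"
definition G_ratio :: "complex \<Rightarrow> local_values \<Rightarrow> complex" where
  "G_ratio e v = e * (v 0 / v 1) - 1"

definition ratio_rate :: "complex \<Rightarrow> complex \<Rightarrow> complex \<Rightarrow> complex \<Rightarrow> complex" where
  "ratio_rate a b c d = (1 - c * d) * (1 - b) / (1 - c) + (1 - a * b) * (1 - c) / (1 - b)"

lemma F_ratio_eq_ratio_rate:
  assumes "e^2 = 1" and "ndF_ratio e x" and "x (-1) \<noteq> 0"
  shows "F_ratio e x = x 0 * ratio_rate (e * (x (-2) / x (-1))) (e * (x (-1) / x 0))
    (e * (x 0 / x 1)) (e * (x 1 / x 2))"
proof -
  have e_square: "(e * a) * (e * b) = a * b" for a b :: complex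
    using assms(1) by (simp add: power2_eq_square algebra_simps)
  have "x 1 \<noteq> 0"
    using assms(2) unfolding ndF_ratio_def by simp
  then have r02: "x 0 / x 2 = (e * (x 0 / x 1)) * (e * (x 1 / x 2))"
    and rm20: "x (-2) / x 0 = (e * (x (-2) / x (-1))) * (e * (x (-1) / x 0))"
    using assms(3) by (simp_all add: e_square)
  show ?thesis
    unfolding F_ratio_def ratio_rate_def r02 rm20 by (simp only: distrib_left times_divide_eq_right)
qed

lemma W_rhs_ratio_rate:
  assumes "p (-1) \<noteq> 1" "p 0 \<noteq> 1" "p 1 \<noteq> 1"
  shows "p 0 * (ratio_rate (p (-2)) (p (-1)) (p 0) (p 1) - ratio_rate (p (-1)) (p 0) (p 1) (p 2))
    = W_rhs (\<lambda>j. p j - 1)"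
proof -
  have "1 - p (-1) \<noteq> 0" "1 - p 0 \<noteq> 0" "1 - p 1 \<noteq> 0" "p (-1) - 1 \<noteq> 0" "p 1 - 1 \<noteq> 0"
    using assms by auto
  then show ?thesis
    unfolding ratio_rate_def W_rhs_def by (simp add: divide_simps) algebra
qed

lemma G_ratio_partials:
  "has_lattice_partials (G_ratio e) (\<lambda>k v. [e / v 1, - (e * v 0 / (v 1)^2), 0, 0] ! k)
    (\<lambda>v. v 1 \<noteq> 0)"
proof (rule has_lattice_partialsI)
  fix u n t y0 y1 y2 y3
  assume nz: "\<And>s. shifts u n s 1 \<noteq> 0"
    and y0: "((\<lambda>s. u n s) has_vector_derivative y0) (at t)"
    and y1: "((\<lambda>s. u (n + 1) s) has_vector_derivative y1) (at t)"
  have "((\<lambda>s. e * (u n s / u (n + 1) s) - 1) has_vector_derivative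
      e * ((y0 * u (n + 1) t - u n t * y1) / (u (n + 1) t)^2) - 0) (at t)"
    using nz[of t] unfolding shifts_def
    by (intro has_vector_derivative_diff has_vector_derivative_mult_right
        has_vector_derivative_quotient y0 y1 has_vector_derivative_const) simp
  then show "((\<lambda>s. G_ratio e (shifts u n s)) has_vector_derivative
      [e / shifts u n t 1, - (e * shifts u n t 0 / (shifts u n t 1)^2), 0, 0] ! 0 * y0
    + [e / shifts u n t 1, - (e * shifts u n t 0 / (shifts u n t 1)^2), 0, 0] ! 1 * y1
    + [e / shifts u n t 1, - (e * shifts u n t 0 / (shifts u n t 1)^2), 0, 0] ! 2 * y2
    + [e / shifts u n t 1, - (e * shifts u n t 0 / (shifts u n t 1)^2), 0, 0] ! 3 * y3) (at t)"
    using nz[of t] unfolding G_ratio_def shifts_def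
    by (simp add: field_simps power2_eq_square)
qed

lemma maps_to_W_ratio:
  assumes "e^2 = 1"
  shows "maps_to_W (F_ratio e) (ndF_ratio e) (G_ratio e) (\<lambda>v. v 1 \<noteq> 0)"
proof (rule maps_to_W_by_partials[OF G_ratio_partials])
  fix x
  assume ndF: "\<And>j. ndF_ratio e (shift j x)" and nz: "\<And>j. G_ratio e (shift j x) \<noteq> 0"
  define p where "p j = e * (x j / x (j + 1))" for j
  have x_nz: "x j \<noteq> 0" for j
    using ndF[of j] unfolding ndF_ratio_def by simp
  have G_shift: "(\<lambda>j. G_ratio e (shift j x)) = (\<lambda>j. p j - 1)"
    by (simp add: G_ratio_def p_def add.commute)
  have p_ne_1: "p j \<noteq> 1" for j
    using nz[of j] fun_cong[OF G_shift, of j] by simp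
  have F0: "F_ratio e x = x 0 * ratio_rate (p (-2)) (p (-1)) (p 0) (p 1)"
    using F_ratio_eq_ratio_rate[OF assms ndF[of 0, simplified] x_nz[of "-1"]] by (simp add: p_def)
  have F1: "F_ratio e (shift 1 x) = x 1 * ratio_rate (p (-1)) (p 0) (p 1) (p 2)"
    using F_ratio_eq_ratio_rate[OF assms ndF[of 1]] x_nz[of 0] by (simp add: p_def)
  have "(\<Sum>k<4. [e / x 1, - (e * x 0 / (x 1)^2), 0, 0] ! k * F_ratio e (shift (int k) x))
      = p 0 * (ratio_rate (p (-2)) (p (-1)) (p 0) (p 1) - ratio_rate (p (-1)) (p 0) (p 1) (p 2))"
    unfolding sum_lessThan_4 using x_nz[of 0] x_nz[of 1]
    by (simp add: F0 F1 p_def field_simps power2_eq_square)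
  also have "\<dots> = W_rhs (\<lambda>j. G_ratio e (shift j x))"
    unfolding G_shift by (rule W_rhs_ratio_rate[OF p_ne_1 p_ne_1 p_ne_1])
  finally show "(\<Sum>k<4. [e / x 1, - (e * x 0 / (x 1)^2), 0, 0] ! k * F_ratio e (shift (int k) x))
      = W_rhs (\<lambda>j. G_ratio e (shift j x))" .
qed

lemma maps_to_W_f: "maps_to_W F_f ndF_f G_f ndG_f"
proof -
  have "F_ratio 1 = F_f" "ndF_ratio 1 = ndF_f" "G_ratio 1 = G_f" "(\<lambda>v. v 1 \<noteq> 0) = ndG_f"
    by (simp_all add: fun_eq_iff F_ratio_def F_f_def ndF_ratio_def ndF_f_def G_ratio_def G_f_def
        ndG_f_def)
  then show ?thesis
    using maps_to_W_ratio[of 1] by simp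
qed

lemma maps_to_W_h: "maps_to_W F_h ndF_h G_h ndG_h"
proof -
  have "F_ratio (-1) = F_h" "ndF_ratio (-1) = ndF_h" "G_ratio (-1) = G_h" "(\<lambda>v. v 1 \<noteq> 0) = ndG_h"
    by (simp_all add: fun_eq_iff F_ratio_def F_h_def ndF_ratio_def ndF_h_def G_ratio_def G_h_def
        ndG_h_def)
  then show ?thesis
    using maps_to_W_ratio[of "-1"] by simp
qed

lemma residues_a: "quotient_residues N_a M_a A_a B_a dN_a dM_a R_a"
  unfolding quotient_residues_def quotient_rule_numerator_def Let_def R_a_def dN_a_def dM_a_def
  apply simp
  apply (unfold N_a_def M_a_def A_a_def B_a_def shift_def)
  apply (simp only: shift_index_simps)
  apply (intro allI conjI; algebra)
  done

lemma residues_c: "quotient_residues N_c M_c A_c B_c dN_c dM_c R_c"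
  unfolding quotient_residues_def quotient_rule_numerator_def Let_def R_c_def dN_c_def dM_c_def
  apply simp
  apply (unfold N_c_def M_c_def A_c_def B_c_def shift_def)
  apply (simp only: shift_index_simps)
  apply (intro allI conjI; algebra)
  done

lemma residues_d: "quotient_residues N_d M_d A_d B_d dN_d dM_d R_d"
  unfolding quotient_residues_def quotient_rule_numerator_def Let_def R_d_def dN_d_def dM_d_def
  apply simp
  apply (unfold N_d_def M_d_def A_d_def B_d_def shift_def)
  apply (simp only: shift_index_simps)
  apply (intro allI conjI; algebra)
  done

lemma residues_i: "quotient_residues (N_i g) (M_i g) (A_i g) (B_i g) (dN_i g) (dM_i g) (R_i g)"
  unfolding quotient_residues_def quotient_rule_numerator_def Let_def R_i_def dN_i_def dM_i_def
    dPQ_i_def dD_i_def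
  apply simp
  apply (unfold N_i_def M_i_def A_i_def B_i_def P_i_def Q_i_def D_i_def shift_def)
  apply (simp only: shift_index_simps)
  apply (intro allI conjI; algebra)
  done

lemma maps_to_W_a: "maps_to_W F_a ndF_a G_a ndG_a"
  by (rule maps_to_W_quotient[OF G_a_quotient F_a_poles N_a_partials M_a_partials residues_a])

lemma maps_to_W_c: "maps_to_W F_c ndF_c G_c ndG_c"
  by (rule maps_to_W_quotient[OF G_c_quotient F_c_poles N_c_partials M_c_partials residues_c])

lemma maps_to_W_d: "maps_to_W F_d ndF_d G_d ndG_d"
  by (rule maps_to_W_quotient[OF G_d_quotient F_d_poles N_d_partials M_d_partials residues_d])

lemma maps_to_W_i:
  assumes "g \<noteq> 0"
  shows "maps_to_W (F_i g) (ndF_i g) (G_i g) (ndG_i g)"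
  by (rule maps_to_W_quotient[OF G_i_quotient[OF assms] F_i_poles[OF assms] N_i_partials
      M_i_partials residues_i])

theorem mainTheorem5:
  shows "maps_to_W F_a ndF_a G_a ndG_a \<and>
         maps_to_W F_c ndF_c G_c ndG_c \<and>
         maps_to_W F_d ndF_d G_d ndG_d \<and>
         maps_to_W F_f ndF_f G_f ndG_f \<and>
         maps_to_W F_h ndF_h G_h ndG_h \<and>
         (\<forall>g::complex. g \<noteq> 0 \<and> g^2 \<noteq> -1 \<longrightarrow> maps_to_W (F_i g) (ndF_i g) (G_i g) (ndG_i g))"
  by (simp add: maps_to_W_a maps_to_W_c maps_to_W_d maps_to_W_f maps_to_W_h maps_to_W_i)

end
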